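(* Let $k$ be an infinite field, $n\ge2$, and let $<$ be a product order on $k[X_1,\ldots,X_n]$ with $X_1<\cdots<X_n$. Let $A\subseteq k^n$ be a finite union of pairwise distinct affine $d$-planes such that for each irreducible component $A'$ of $A$, the index $1$ is not among the indices of the minimal free variables of $A'$ (equivalently, $X_1$ is constant on each component). Let $Y=\{a_1;\ a\in A\}\subseteq k$ (a finite set), and for $\lambda\in Y$ let $A_\lambda=\{a'\in k^{n-1};\ (\lambda,a')\in A\}$ and $D(A_\lambda)\subseteq\mathbb{N}^{n-1}$ its standard set with respect to the restriction of $<$ to $k[X_2,\ldots,X_n]$, identified with $\{0\}\times D(A_\lambda)\subseteq\mathbb{N}^n$. Then $$D(A)=\sum_{\lambda\in Y}D(A_\lambda),$$ i.e. $D(A)=\{\beta\in\mathbb{N}^n;\ \beta_1<\#\{\lambda\in Y;\ p(\beta)\in D(A_\lambda)\}\}$.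
   Context: $p:\mathbb{N}^n\to\mathbb{N}^{n-1}$, $(\alpha_1,\ldots,\alpha_n)\mapsto(\alpha_2,\ldots,\alpha_n)$. A term order $<$ on $k[X_1,\ldots,X_n]$ is a product order if for all $\alpha,\beta\in\mathbb{N}^n$: $\alpha<\beta$ iff either $p(\alpha)<p(\beta)$, or $p(\alpha)=p(\beta)$ and $\alpha_1<\beta_1$. For $A\subseteq k^m$, $I(A)$ is the ideal of polynomials vanishing on $A$, ${\rm LE}(f)$ the leading exponent, $C(A)=\{{\rm LE}(f);\ 0\ne f\in I(A)\}$, and $D(A)=\mathbb{N}^m\setminus C(A)$. Addition of standard sets: let $\overline{\mathbb{D}}_n$ be the set of subsets $\delta\subseteq\mathbb{N}^n$ whose complement is closed under adding elements of $\mathbb{N}^n$ and which do not contain $\mathbb{N}e_1$; for $\delta,\delta'\in\overline{\mathbb{D}}_n$, $\delta+\delta'=\{\beta\in\mathbb{N}^n;\ p(\beta)\in p(\delta)\cup p(\delta'),\ \beta_1<\#(p^{-1}(p(\beta))\cap\delta)+\#(p^{-1}(p(\beta))\cap\delta')\}$; this is commutative and associative, so finite sums are defined; for sets of the form $\{0\}\times\epsilon_\lambda$ the finite sum equals $\{\beta;\ \beta_1<\#\{\lambda;\ p(\beta)\in\epsilon_\lambda\}\}$. An affine $d$-plane is a translate of a $d$-dimensional linear subspace; for $\#J=d$, $\{X_j;\ j\in J\}$ is a set of free variables of an affine $d$-plane $A'$ if the projection $A'\to k^J$ is bijective, and minimal if moreover no exchange of some $j\in J$ by some $i\notin J$ with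 $i<j$ yields a set of free variables. *)

theory Defs
  imports Main
begin

text \<open>Conventions: indices are 0-based (paper index 1 is index 0).
  Exponent vectors in N^m are functions nat => nat vanishing outside {..<m};
  points of k^m are functions nat => 'a vanishing outside {..<m};
  polynomials in k[X_1..X_m] are finitely supported coefficient functions
  on N^m.\<close>

definition expn :: "nat \<Rightarrow> (nat \<Rightarrow> nat) set" where
  "expn m = {\<alpha>. \<forall>i\<ge>m. \<alpha> i = 0}"

definition kvec :: "nat \<Rightarrow> (nat \<Rightarrow> 'a::zero) set" where
  "kvec m = {a. \<forall>i\<ge>m. a i = 0}"

definition polys :: "nat \<Rightarrow> ((nat \<Rightarrow> nat) \<Rightarrow> 'a::zero) set" where
  "polys m = {f. finite {\<alpha>. f \<alpha> \<noteq> 0} \<and> {\<alpha>. f \<alpha> \<noteq> 0} \<subseteq> expn m}"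

definition peval :: "nat \<Rightarrow> ((nat \<Rightarrow> nat) \<Rightarrow> 'a::comm_ring_1) \<Rightarrow> (nat \<Rightarrow> 'a) \<Rightarrow> 'a" where
  "peval m f a = (\<Sum>\<alpha>\<in>{\<alpha>. f \<alpha> \<noteq> 0}. f \<alpha> * (\<Prod>i<m. a i ^ \<alpha> i))"

definition unitv :: "nat \<Rightarrow> nat \<Rightarrow> nat" where
  "unitv i = (\<lambda>j. if j = i then 1 else 0)"

definition term_order :: "nat \<Rightarrow> ((nat \<Rightarrow> nat) \<Rightarrow> (nat \<Rightarrow> nat) \<Rightarrow> bool) \<Rightarrow> bool" where
  "term_order m lt \<longleftrightarrow>
     (\<forall>\<alpha>\<in>expn m. \<not> lt \<alpha> \<alpha>) \<and>
     (\<forall>\<alpha>\<in>expn m. \<forall>\<beta>\<in>expn m. \<forall>\<gamma>\<in>expn m. lt \<alpha> \<beta> \<longrightarrow> lt \<beta> \<gamma> \<longrightarrow> lt \<alpha> \<gamma>) \<and>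
     (\<forall>\<alpha>\<in>expn m. \<forall>\<beta>\<in>expn m. \<alpha> \<noteq> \<beta> \<longrightarrow> lt \<alpha> \<beta> \<or> lt \<beta> \<alpha>) \<and>
     (\<forall>\<alpha>\<in>expn m. \<forall>\<beta>\<in>expn m. \<forall>\<gamma>\<in>expn m.
        lt \<alpha> \<beta> \<longrightarrow> lt (\<lambda>i. \<alpha> i + \<gamma> i) (\<lambda>i. \<beta> i + \<gamma> i)) \<and>
     (\<forall>\<alpha>\<in>expn m. \<alpha> \<noteq> (\<lambda>_. 0) \<longrightarrow> lt (\<lambda>_. 0) \<alpha>)"

definition pdrop :: "(nat \<Rightarrow> 'b) \<Rightarrow> (nat \<Rightarrow> 'b)" where
  "pdrop \<alpha> = (\<lambda>i. \<alpha> (Suc i))"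

definition shift0 :: "(nat \<Rightarrow> nat) \<Rightarrow> (nat \<Rightarrow> nat)" where
  "shift0 \<gamma> = (\<lambda>i. if i = 0 then 0 else \<gamma> (i - 1))"

definition restr_order :: "((nat \<Rightarrow> nat) \<Rightarrow> (nat \<Rightarrow> nat) \<Rightarrow> bool) \<Rightarrow> (nat \<Rightarrow> nat) \<Rightarrow> (nat \<Rightarrow> nat) \<Rightarrow> bool" where
  "restr_order lt \<gamma> \<delta> \<longleftrightarrow> lt (shift0 \<gamma>) (shift0 \<delta>)"

definition product_order :: "nat \<Rightarrow> ((nat \<Rightarrow> nat) \<Rightarrow> (nat \<Rightarrow> nat) \<Rightarrow> bool) \<Rightarrow> bool" where
  "product_order n lt \<longleftrightarrow> term_order n lt \<and>
     (\<forall>\<alpha>\<in>expn n. \<forall>\<beta>\<in>expn n. lt \<alpha> \<beta> \<longleftrightarrow>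
        (restr_order lt (pdrop \<alpha>) (pdrop \<beta>) \<or> (pdrop \<alpha> = pdrop \<beta> \<and> \<alpha> 0 < \<beta> 0)))"

definition LE :: "((nat \<Rightarrow> nat) \<Rightarrow> (nat \<Rightarrow> nat) \<Rightarrow> bool) \<Rightarrow> ((nat \<Rightarrow> nat) \<Rightarrow> 'a::zero) \<Rightarrow> nat \<Rightarrow> nat" where
  "LE lt f = (THE \<alpha>. f \<alpha> \<noteq> 0 \<and> (\<forall>\<beta>. f \<beta> \<noteq> 0 \<longrightarrow> \<beta> = \<alpha> \<or> lt \<beta> \<alpha>))"

definition vanishing_ideal :: "nat \<Rightarrow> (nat \<Rightarrow> 'a::comm_ring_1) set \<Rightarrow> ((nat \<Rightarrow> nat) \<Rightarrow> 'a) set" where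
  "vanishing_ideal m A = {f \<in> polys m. \<forall>a\<in>A. peval m f a = 0}"

definition Cset :: "nat \<Rightarrow> ((nat \<Rightarrow> nat) \<Rightarrow> (nat \<Rightarrow> nat) \<Rightarrow> bool) \<Rightarrow> (nat \<Rightarrow> 'a::comm_ring_1) set \<Rightarrow> (nat \<Rightarrow> nat) set" where
  "Cset m lt A = {LE lt f | f. f \<in> vanishing_ideal m A \<and> f \<noteq> (\<lambda>_. 0)}"

definition Dset :: "nat \<Rightarrow> ((nat \<Rightarrow> nat) \<Rightarrow> (nat \<Rightarrow> nat) \<Rightarrow> bool) \<Rightarrow> (nat \<Rightarrow> 'a::comm_ring_1) set \<Rightarrow> (nat \<Rightarrow> nat) set" where
  "Dset m lt A = expn m - Cset m lt A"

definition affine_plane :: "nat \<Rightarrow> nat \<Rightarrow> (nat \<Rightarrow> 'a::field) set \<Rightarrow> bool" where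
  "affine_plane n d P \<longleftrightarrow> (\<exists>b w. b \<in> kvec n \<and> (\<forall>j<d. w j \<in> kvec n) \<and>
     (\<forall>t. (\<forall>i. (\<Sum>j<d. t j * w j i) = 0) \<longrightarrow> (\<forall>j<d. t j = 0)) \<and>
     P = {(\<lambda>i. b i + (\<Sum>j<d. t j * w j i)) | t. True})"

definition free_vars :: "nat \<Rightarrow> nat \<Rightarrow> (nat \<Rightarrow> 'a::field) set \<Rightarrow> nat set \<Rightarrow> bool" where
  "free_vars n d P J \<longleftrightarrow> J \<subseteq> {..<n} \<and> card J = d \<and>
     bij_betw (\<lambda>a i. if i \<in> J then a i else 0) P {c. \<forall>i. i \<notin> J \<longrightarrow> c i = 0}"

definition minimal_free_vars :: "nat \<Rightarrow> nat \<Rightarrow> (nat \<Rightarrow> 'a::field) set \<Rightarrow> nat set \<Rightarrow> bool" where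
  "minimal_free_vars n d P J \<longleftrightarrow> free_vars n d P J \<and>
     \<not> (\<exists>j\<in>J. \<exists>i\<in>{..<n} - J. i < j \<and> free_vars n d P (insert i (J - {j})))"

end

theory Submission
  imports Defs "HOL-Computational_Algebra.Polynomial"
begin

text \<open>
  Under the hypothesis of the theorem every component therefore lies in a
      hyperplane X_1 = c, so Y is finite.
  (2) Polynomials as finitely supported coefficient functions, their evaluation, and leading
      exponents for strict total orders, in particular product orders.
  (3) If f vanishes on A with leading exponent beta, each c in Y with p(beta) in D(A_c) is a
      root of the coefficient of X'^p(beta) in f, a polynomial in X_1 of degree beta_1.
  (4) Conversely, if beta_1 is at least that number, Lagrange interpolation over the other
      slices produces a polynomial vanishing on A with leading exponent beta.
\<close>

definition indep_on :: "nat \<Rightarrow> (nat \<Rightarrow> nat \<Rightarrow> 'a::field) \<Rightarrow> nat set \<Rightarrow> bool" where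
  "indep_on d w J \<longleftrightarrow> (\<forall>t. (\<forall>i\<in>J. (\<Sum>j<d. t j * w j i) = 0) \<longrightarrow> (\<forall>j<d. t j = 0))"

text \<open>Every prescribed tuple of values on the coordinates J is attained by some linear
  combination of w 0, ..., w (d-1); together with indep_on this says the projection of the
  direction space onto k^J is bijective.\<close>

definition spans_on :: "nat \<Rightarrow> (nat \<Rightarrow> nat \<Rightarrow> 'a::field) \<Rightarrow> nat set \<Rightarrow> bool" where
  "spans_on d w J \<longleftrightarrow> (\<forall>c. \<exists>t. \<forall>i\<in>J. (\<Sum>j<d. t j * w j i) = c i)"

definition skip :: "nat \<Rightarrow> nat \<Rightarrow> nat" where
  "skip jp j = (if j < jp then j else Suc j)"

definition insert_at :: "nat \<Rightarrow> 'b \<Rightarrow> (nat \<Rightarrow> 'b) \<Rightarrow> nat \<Rightarrow> 'b" where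
  "insert_at jp \<tau> s j = (if j < jp then s j else if j = jp then \<tau> else s (j - 1))"

lemma insert_at_skip [simp]: "insert_at jp \<tau> s (skip jp j) = s j"
  by (auto simp: insert_at_def skip_def)

lemma insert_at_at [simp]: "insert_at jp \<tau> s jp = \<tau>"
  by (simp add: insert_at_def)

lemma insert_at_split: "insert_at jp (t jp) (\<lambda>j. t (skip jp j)) = t"
  by (auto simp: insert_at_def skip_def fun_eq_iff)

lemma lessThan_Suc_skip: "jp < Suc d \<Longrightarrow> {..<Suc d} = insert jp (skip jp ` {..<d})"
proof (rule set_eqI, rule iffI)
  fix x assume "jp < Suc d" "x \<in> {..<Suc d}"
  then consider "x < jp" | "x = jp" | "jp < x" "x - 1 < d" by fastforce
  then show "x \<in> insert jp (skip jp ` {..<d})"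
  proof cases
    case 1 then show ?thesis using \<open>jp < Suc d\<close> by (auto simp: skip_def image_iff intro!: bexI[of _ x])
  next
    case 3 then have "x = skip jp (x - 1)" by (auto simp: skip_def)
    then show ?thesis using 3 by blast
  qed simp
qed (auto simp: skip_def)

lemma sum_lessThan_Suc_skip:
  assumes "jp < Suc d"
  shows "(\<Sum>j<Suc d. h j) = h jp + (\<Sum>j<d. h (skip jp j))"
proof -
  have "jp \<notin> skip jp ` {..<d}" "inj_on (skip jp) {..<d}"
    by (auto simp: skip_def inj_on_def)
  then show ?thesis
    by (simp add: lessThan_Suc_skip[OF assms] sum.reindex)
qed

definition eliminate :: "(nat \<Rightarrow> nat \<Rightarrow> 'a::field) \<Rightarrow> nat \<Rightarrow> nat \<Rightarrow> nat \<Rightarrow> nat \<Rightarrow> 'a" where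
  "eliminate w jp ip j i = w (skip jp j) i - (w (skip jp j) ip / w jp ip) * w jp i"

lemma eliminate_pivot_column: "w jp ip \<noteq> 0 \<Longrightarrow> eliminate w jp ip j ip = 0"
  by (simp add: eliminate_def)

lemma sum_insert_at_eliminate:
  assumes "jp < Suc d"
  shows "(\<Sum>j<Suc d. insert_at jp \<tau> s j * w j i) =
    (\<tau> + (\<Sum>j<d. s j * w (skip jp j) ip) / w jp ip) * w jp i + (\<Sum>j<d. s j * eliminate w jp ip j i)"
proof -
  have elim: "(\<Sum>j<d. s j * eliminate w jp ip j i) =
      (\<Sum>j<d. s j * w (skip jp j) i) - (\<Sum>j<d. s j * w (skip jp j) ip) / w jp ip * w jp i"
  proof -
    have "(\<Sum>j<d. s j * w (skip jp j) ip) / w jp ip * w jp i =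
        (\<Sum>j<d. s j * w (skip jp j) ip * (w jp i / w jp ip))"
      by (simp add: sum_distrib_right sum_divide_distrib)
    then show ?thesis
      by (simp add: eliminate_def sum_subtractf[symmetric] algebra_simps)
  qed
  have "(\<Sum>j<Suc d. insert_at jp \<tau> s j * w j i) = \<tau> * w jp i + (\<Sum>j<d. s j * w (skip jp j) i)"
    by (simp only: sum_lessThan_Suc_skip[OF assms]) simp
  then show ?thesis by (simp add: elim algebra_simps)
qed

lemma indep_on_eliminate:
  assumes "jp < Suc d" "indep_on (Suc d) w J"
  shows "indep_on d (eliminate w jp ip) J"
  unfolding indep_on_def
proof (intro allI impI)
  fix s j assume s: "\<forall>i\<in>J. (\<Sum>j<d. s j * eliminate w jp ip j i) = 0" and "j < d"
  define t where "t = insert_at jp (- (\<Sum>j<d. s j * w (skip jp j) ip) / w jp ip) s"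
  have "(\<Sum>j<Suc d. t j * w j i) = 0 * w jp i + (\<Sum>j<d. s j * eliminate w jp ip j i)" for i
    unfolding t_def by (subst sum_insert_at_eliminate[OF assms(1), where ip = ip]) simp
  then have "\<forall>i\<in>J. (\<Sum>j<Suc d. t j * w j i) = 0"
    using s by simp
  then have "\<forall>j<Suc d. t j = 0" using assms(2) by (simp add: indep_on_def)
  moreover have "skip jp j < Suc d" using \<open>j < d\<close> by (simp add: skip_def)
  ultimately show "s j = 0" by (metis t_def insert_at_skip)
qed

lemma spans_on_insert_pivot:
  assumes "jp < Suc d" "w jp ip \<noteq> 0" "spans_on d (eliminate w jp ip) J"
  shows "spans_on (Suc d) w (insert ip J)"
  unfolding spans_on_def
proof
  fix c
  obtain s where s: "\<forall>i\<in>J. (\<Sum>j<d. s j * eliminate w jp ip j i) = c i - (c ip / w jp ip) * w jp i"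
    using assms(3)[unfolded spans_on_def, rule_format, of "\<lambda>i. c i - c ip / w jp ip * w jp i"]
    by blast
  define t where "t = insert_at jp (c ip / w jp ip - (\<Sum>j<d. s j * w (skip jp j) ip) / w jp ip) s"
  have "(\<Sum>j<Suc d. t j * w j i) = (c ip / w jp ip) * w jp i + (\<Sum>j<d. s j * eliminate w jp ip j i)" for i
    unfolding t_def by (subst sum_insert_at_eliminate[OF assms(1), where ip = ip]) simp
  then have "\<forall>i\<in>insert ip J. (\<Sum>j<Suc d. t j * w j i) = c i"
    using s assms(2) by (simp add: eliminate_pivot_column)
  then show "\<exists>t. \<forall>i\<in>insert ip J. (\<Sum>j<Suc d. t j * w j i) = c i" by blast
qed

lemma indep_on_insert_pivot:
  assumes "jp < Suc d" "w jp ip \<noteq> 0" "indep_on d (eliminate w jp ip) J"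
  shows "indep_on (Suc d) w (insert ip J)"
  unfolding indep_on_def
proof (intro allI impI)
  fix t j assume t: "\<forall>i\<in>insert ip J. (\<Sum>j<Suc d. t j * w j i) = 0" and "j < Suc d"
  define s where "s = (\<lambda>j. t (skip jp j))"
  define \<tau> where "\<tau> = t jp + (\<Sum>j<d. s j * w (skip jp j) ip) / w jp ip"
  have sum_t: "(\<Sum>j<Suc d. t j * w j i) = \<tau> * w jp i + (\<Sum>j<d. s j * eliminate w jp ip j i)" for i
  proof -
    have "(\<Sum>j<Suc d. t j * w j i) = (\<Sum>j<Suc d. insert_at jp (t jp) s j * w j i)"
      by (simp only: s_def insert_at_split)
    also have "\<dots> = \<tau> * w jp i + (\<Sum>j<d. s j * eliminate w jp ip j i)"
      unfolding \<tau>_def by (rule sum_insert_at_eliminate[OF assms(1)])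
    finally show ?thesis .
  qed
  have "\<tau> = 0" using t[rule_format, of ip] sum_t[of ip] assms(2) by (simp add: eliminate_pivot_column)
  then have "\<forall>i\<in>J. (\<Sum>j<d. s j * eliminate w jp ip j i) = 0" using t sum_t by simp
  then have s0: "\<forall>j<d. s j = 0" using assms(3) by (simp add: indep_on_def)
  then have "t jp = 0" using \<open>\<tau> = 0\<close> by (simp add: \<tau>_def)
  then show "t j = 0"
    using s0 \<open>j < Suc d\<close> lessThan_Suc_skip[OF assms(1)] by (auto simp: s_def)
qed

lemma pivot_notin_spans_on:
  assumes "spans_on d v J" "\<forall>j. v j ip = 0"
  shows "ip \<notin> J"
proof
  assume "ip \<in> J"
  obtain t where "\<forall>i\<in>J. (\<Sum>j<d. t j * v j i) = (1::'a)"
    using assms(1) unfolding spans_on_def by fast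
  then show False using \<open>ip \<in> J\<close> assms(2) by force
qed

lemma indep_on_nonzero:
  assumes "indep_on d w UNIV" "j < d"
  shows "\<exists>i. w j i \<noteq> 0"
proof (rule ccontr)
  assume "\<nexists>i. w j i \<noteq> 0"
  then have "\<forall>i. (\<Sum>k<d. (if k = j then 1 else 0) * w k i) = 0"
    using assms(2) by (subst sum.cong[OF refl, of _ _ "\<lambda>k. if k = j then w k i else 0" for i]) auto
  then show False using assms unfolding indep_on_def by fastforce
qed

text \<open>Induction on d
  by Gaussian elimination with pivot (jp, ip).\<close>

lemma coordinate_set_exists:
  fixes w :: "nat \<Rightarrow> nat \<Rightarrow> 'a::field"
  assumes "\<forall>j<d. w j \<in> kvec n" "indep_on d w UNIV" "jp < d" "w jp ip \<noteq> 0"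
  shows "\<exists>J \<subseteq> {..<n}. card J = d \<and> ip \<in> J \<and> spans_on d w J \<and> indep_on d w J"
  using assms
proof (induction d arbitrary: w jp ip)
  case 0
  then show ?case by simp
next
  case (Suc d)
  define v where "v = eliminate w jp ip"
  have ip_less: "ip < n"
  proof (rule ccontr)
    assume "\<not> ip < n"
    then have "w jp ip = 0" using Suc.prems(1,3) by (auto simp: kvec_def)
    then show False using Suc.prems(4) by simp
  qed
  have v_kvec: "\<forall>j<d. v j \<in> kvec n"
    using Suc.prems(1,3) by (auto simp: v_def eliminate_def kvec_def skip_def)
  have v_indep: "indep_on d v UNIV"
    unfolding v_def by (rule indep_on_eliminate[OF Suc.prems(3,2)])
  obtain J where J: "J \<subseteq> {..<n}" "card J = d" "spans_on d v J" "indep_on d v J"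
  proof (cases "d = 0")
    case True
    then show ?thesis using that[of "{}"] by (simp add: spans_on_def indep_on_def)
  next
    case False
    then obtain i' where i': "v 0 i' \<noteq> 0" using indep_on_nonzero[OF v_indep] by blast
    show ?thesis using Suc.IH[OF v_kvec v_indep _ i'] False that by blast
  qed
  have "ip \<notin> J"
    using pivot_notin_spans_on[OF J(3)] Suc.prems(4) by (simp add: v_def eliminate_pivot_column)
  moreover have "finite J" using J(1) finite_subset by blast
  moreover have "spans_on (Suc d) w (insert ip J)"
    using spans_on_insert_pivot[of jp d w ip J] Suc.prems(3,4) J(3) by (simp add: v_def)
  moreover have "indep_on (Suc d) w (insert ip J)"
    using indep_on_insert_pivot[of jp d w ip J] Suc.prems(3,4) J(4) by (simp add: v_def)
  ultimately show ?case using J(1,2) ip_less by (intro exI[of _ "insert ip J"]) auto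
qed

lemma free_vars_of_coordinates:
  fixes w :: "nat \<Rightarrow> nat \<Rightarrow> 'a::field"
  assumes P: "P = {(\<lambda>i. b i + (\<Sum>j<d. t j * w j i)) | t. True}"
    and J: "J \<subseteq> {..<n}" "card J = d" "spans_on d w J" "indep_on d w J"
  shows "free_vars n d P J"
  unfolding free_vars_def bij_betw_def
proof (intro conjI)
  define point where "point t = (\<lambda>i. b i + (\<Sum>j<d. t j * w j i))" for t
  have P_range: "P = range point" using P unfolding point_def by auto
  show "J \<subseteq> {..<n}" "card J = d" using J by auto
  show "inj_on (\<lambda>a i. if i \<in> J then a i else 0) P"
  proof (rule inj_onI)
    fix x y assume "x \<in> P" "y \<in> P"
      and eq: "(\<lambda>i. if i \<in> J then x i else 0) = (\<lambda>i. if i \<in> J then y i else 0)"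
    then obtain t1 t2 where x: "x = point t1" and y: "y = point t2" using P_range by auto
    have "\<forall>i\<in>J. (\<Sum>j<d. (t1 j - t2 j) * w j i) = 0"
    proof
      fix i assume "i \<in> J"
      then have "x i = y i" using eq by meson
      then show "(\<Sum>j<d. (t1 j - t2 j) * w j i) = 0"
        by (simp add: x y point_def left_diff_distrib sum_subtractf)
    qed
    then have "\<forall>j<d. t1 j = t2 j" using J(4) unfolding indep_on_def by fastforce
    then show "x = y" by (simp add: x y point_def)
  qed
  show "(\<lambda>a i. if i \<in> J then a i else 0) ` P = {c. \<forall>i. i \<notin> J \<longrightarrow> c i = 0}"
  proof (rule set_eqI, rule iffI)
    fix c :: "nat \<Rightarrow> 'a" assume "c \<in> {c. \<forall>i. i \<notin> J \<longrightarrow> c i = 0}"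
    then have c0: "\<forall>i. i \<notin> J \<longrightarrow> c i = 0" by simp
    obtain t where t: "\<forall>i\<in>J. (\<Sum>j<d. t j * w j i) = c i - b i"
      using J(3)[unfolded spans_on_def, rule_format, of "\<lambda>i. c i - b i"] by blast
    have "(\<lambda>i. if i \<in> J then point t i else 0) = c"
      using t c0 by (auto simp: point_def)
    then show "c \<in> (\<lambda>a i. if i \<in> J then a i else 0) ` P" using P_range by auto
  qed auto
qed

lemma sum_exchange_less:
  fixes J :: "nat set"
  assumes "finite J" "j \<in> J" "i \<notin> J" "i < j"
  shows "\<Sum>(insert i (J - {j})) < \<Sum>J"
proof -
  have "\<Sum>(insert i (J - {j})) = i + \<Sum>(J - {j})" using assms by simp
  moreover have "\<Sum>(J - {j}) + j = \<Sum>J" using assms by (simp add: sum.remove add.commute)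
  ultimately show ?thesis using assms(4) by linarith
qed

text \<open>Minimising the index sum among free-variable sets containing 0 yields a minimal set of
  free variables; the exchanges in the definition of minimality never remove index 0.\<close>

lemma minimal_free_vars_containing_0:
  assumes "free_vars n d P J" "0 \<in> J"
  shows "\<exists>J'. minimal_free_vars n d P J' \<and> 0 \<in> J'"
proof -
  define Q where "Q J' \<longleftrightarrow> free_vars n d P J' \<and> 0 \<in> J'" for J'
  obtain J0 where J0: "Q J0" "\<And>J'. Q J' \<Longrightarrow> \<Sum>J0 \<le> \<Sum>J'"
    using ex_has_least_nat[of Q J "\<lambda>J. \<Sum>J"] assms Q_def by blast
  have fin: "finite J0"
    using J0(1) unfolding Q_def free_vars_def by (meson finite_lessThan finite_subset)
  have "minimal_free_vars n d P J0"
    unfolding minimal_free_vars_def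
  proof (intro conjI notI)
    show "free_vars n d P J0" using J0(1) Q_def by simp
    assume "\<exists>j\<in>J0. \<exists>i\<in>{..<n} - J0. i < j \<and> free_vars n d P (insert i (J0 - {j}))"
    then obtain j i where ji: "j \<in> J0" "i \<notin> J0" "i < j" "free_vars n d P (insert i (J0 - {j}))"
      by blast
    then have "Q (insert i (J0 - {j}))" using J0(1) unfolding Q_def by auto
    then show False using J0(2) sum_exchange_less[OF fin ji(1-3)] by fastforce
  qed
  then show ?thesis using J0(1) Q_def by blast
qed

text \<open>If no minimal set of free variables of an affine plane contains the first variable,
  then the first coordinate is constant on the plane: otherwise coordinate_set_exists gives
  free variables containing 0, and then also minimal ones.\<close>

lemma affine_plane_first_coordinate_const:
  fixes P :: "(nat \<Rightarrow> 'a::field) set"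
  assumes "affine_plane n d P" "\<forall>J. minimal_free_vars n d P J \<longrightarrow> 0 \<notin> J"
  shows "\<exists>c. \<forall>a\<in>P. a 0 = c"
proof -
  obtain b w where bw: "\<forall>j<d. w j \<in> kvec n" "indep_on d w UNIV"
     "P = {(\<lambda>i. b i + (\<Sum>j<d. t j * w j i)) | t. True}"
    using assms(1) unfolding affine_plane_def indep_on_def by auto
  show ?thesis
  proof (cases "\<forall>j<d. w j 0 = 0")
    case True
    then show ?thesis using bw(3) by (intro exI[of _ "b 0"]) auto
  next
    case False
    then obtain jp where "jp < d" "w jp 0 \<noteq> 0" by auto
    then obtain J where "J \<subseteq> {..<n}" "card J = d" "0 \<in> J" "spans_on d w J" "indep_on d w J"
      using coordinate_set_exists[OF bw(1,2)] by blast
    then have "free_vars n d P J" "0 \<in> J" using free_vars_of_coordinates[OF bw(3)] by auto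
    then show ?thesis using minimal_free_vars_containing_0 assms(2) by blast
  qed
qed

definition ccons :: "'b \<Rightarrow> (nat \<Rightarrow> 'b) \<Rightarrow> nat \<Rightarrow> 'b" where
  "ccons x g = (\<lambda>i. if i = 0 then x else g (i - 1))"

lemma pdrop_ccons [simp]: "pdrop (ccons x g) = g"
  by (simp add: pdrop_def ccons_def)

lemma ccons_0 [simp]: "ccons x g 0 = x"
  by (simp add: ccons_def)

lemma ccons_pdrop [simp]: "ccons (\<alpha> 0) (pdrop \<alpha>) = \<alpha>"
  by (auto simp: pdrop_def ccons_def)

lemma ccons_eq_iff: "\<alpha> = ccons x g \<longleftrightarrow> \<alpha> 0 = x \<and> pdrop \<alpha> = g"
  by (metis ccons_0 ccons_pdrop pdrop_ccons)

lemma shift0_eq_ccons: "shift0 = ccons 0"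
  by (auto simp: shift0_def ccons_def fun_eq_iff)

lemma expn_Suc: "\<alpha> \<in> expn (Suc m) \<longleftrightarrow> pdrop \<alpha> \<in> expn m"
  unfolding expn_def pdrop_def
proof safe
  fix i assume "\<forall>i\<ge>m. \<alpha> (Suc i) = 0" "Suc m \<le> i"
  then show "\<alpha> i = 0" by (metis Suc_le_D Suc_le_mono)
qed auto

definition pmono :: "nat \<Rightarrow> (nat \<Rightarrow> 'a::comm_ring_1) \<Rightarrow> (nat \<Rightarrow> nat) \<Rightarrow> 'a" where
  "pmono m a \<alpha> = (\<Prod>i<m. a i ^ \<alpha> i)"

lemma pmono_Suc: "pmono (Suc m) a \<alpha> = a 0 ^ \<alpha> 0 * pmono m (pdrop a) (pdrop \<alpha>)"
  unfolding pmono_def pdrop_def by (subst prod.lessThan_Suc_shift) simp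

lemma peval_superset:
  assumes "finite F" "{\<alpha>. f \<alpha> \<noteq> 0} \<subseteq> F"
  shows "peval m f a = (\<Sum>\<alpha>\<in>F. f \<alpha> * pmono m a \<alpha>)"
  unfolding peval_def pmono_def
  by (rule sum.mono_neutral_left) (use assms in auto)

lemma polys_lin:
  fixes f g :: "(nat \<Rightarrow> nat) \<Rightarrow> 'a::comm_ring_1"
  assumes "f \<in> polys m" "g \<in> polys m"
  shows "(\<lambda>\<alpha>. r * f \<alpha> + s * g \<alpha>) \<in> polys m"
proof -
  have "{\<alpha>. r * f \<alpha> + s * g \<alpha> \<noteq> 0} \<subseteq> {\<alpha>. f \<alpha> \<noteq> 0} \<union> {\<alpha>. g \<alpha> \<noteq> 0}" by auto
  then show ?thesis using assms unfolding polys_def by (auto intro: finite_subset)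
qed

lemma peval_lin:
  assumes "f \<in> polys m" "g \<in> polys m"
  shows "peval m (\<lambda>\<alpha>. r * f \<alpha> + s * g \<alpha>) a = r * peval m f a + s * peval m g a"
proof -
  define F where "F = {\<alpha>. f \<alpha> \<noteq> 0} \<union> {\<alpha>. g \<alpha> \<noteq> 0}"
  have fin: "finite F" using assms by (simp add: F_def polys_def)
  have "peval m (\<lambda>\<alpha>. r * f \<alpha> + s * g \<alpha>) a = (\<Sum>\<alpha>\<in>F. (r * f \<alpha> + s * g \<alpha>) * pmono m a \<alpha>)"
    by (rule peval_superset[OF fin]) (auto simp: F_def)
  also have "\<dots> = r * (\<Sum>\<alpha>\<in>F. f \<alpha> * pmono m a \<alpha>) + s * (\<Sum>\<alpha>\<in>F. g \<alpha> * pmono m a \<alpha>)"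
    by (simp add: sum.distrib sum_distrib_left algebra_simps)
  also have "\<dots> = r * peval m f a + s * peval m g a"
    by (subst (1 2) peval_superset[OF fin]) (auto simp: F_def)
  finally show ?thesis .
qed

lemma polys_add:
  fixes f g :: "(nat \<Rightarrow> nat) \<Rightarrow> 'a::comm_ring_1"
  shows "f \<in> polys m \<Longrightarrow> g \<in> polys m \<Longrightarrow> (\<lambda>\<alpha>. f \<alpha> + g \<alpha>) \<in> polys m"
  using polys_lin[where r = 1 and s = 1] by simp

lemma peval_add:
  fixes f g :: "(nat \<Rightarrow> nat) \<Rightarrow> 'a::comm_ring_1"
  shows "f \<in> polys m \<Longrightarrow> g \<in> polys m \<Longrightarrow> peval m (\<lambda>\<alpha>. f \<alpha> + g \<alpha>) a = peval m f a + peval m g a"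
  using peval_lin[where r = 1 and s = 1] by simp

lemma polys_sum:
  assumes "finite T" "\<forall>\<mu>\<in>T. h \<mu> \<in> polys m"
  shows "(\<lambda>\<alpha>. \<Sum>\<mu>\<in>T. h \<mu> \<alpha>) \<in> polys m"
proof -
  have "{\<alpha>. (\<Sum>\<mu>\<in>T. h \<mu> \<alpha>) \<noteq> 0} \<subseteq> (\<Union>\<mu>\<in>T. {\<alpha>. h \<mu> \<alpha> \<noteq> 0})"
    by (auto intro: ccontr)
  then show ?thesis using assms unfolding polys_def by (auto intro: finite_subset)
qed

lemma peval_sum:
  assumes "finite T" "\<forall>\<mu>\<in>T. h \<mu> \<in> polys m"
  shows "peval m (\<lambda>\<alpha>. \<Sum>\<mu>\<in>T. h \<mu> \<alpha>) a = (\<Sum>\<mu>\<in>T. peval m (h \<mu>) a)"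
proof -
  define F where "F = (\<Union>\<mu>\<in>T. {\<alpha>. h \<mu> \<alpha> \<noteq> 0})"
  have fin: "finite F" using assms by (auto simp: F_def polys_def)
  have "peval m (\<lambda>\<alpha>. \<Sum>\<mu>\<in>T. h \<mu> \<alpha>) a = (\<Sum>\<alpha>\<in>F. (\<Sum>\<mu>\<in>T. h \<mu> \<alpha>) * pmono m a \<alpha>)"
    by (rule peval_superset[OF fin]) (auto simp: F_def intro: ccontr)
  also have "\<dots> = (\<Sum>\<mu>\<in>T. \<Sum>\<alpha>\<in>F. h \<mu> \<alpha> * pmono m a \<alpha>)"
    by (simp add: sum_distrib_right sum.swap[of _ F])
  also have "\<dots> = (\<Sum>\<mu>\<in>T. peval m (h \<mu>) a)"
    by (rule sum.cong[OF refl], rule peval_superset[OF fin, symmetric]) (auto simp: F_def)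
  finally show ?thesis .
qed

definition monomial :: "(nat \<Rightarrow> nat) \<Rightarrow> (nat \<Rightarrow> nat) \<Rightarrow> 'a::comm_ring_1" where
  "monomial \<gamma> = (\<lambda>\<delta>. if \<delta> = \<gamma> then 1 else 0)"

lemma monomial_polys: "\<gamma> \<in> expn m \<Longrightarrow> monomial \<gamma> \<in> polys m"
  by (simp add: polys_def monomial_def)

lemma peval_monomial: "peval m (monomial \<gamma>) a = pmono m a \<gamma>"
  by (subst peval_superset[of "{\<gamma>}"]) (auto simp: monomial_def)

definition lift :: "'a::comm_ring_1 poly \<Rightarrow> ((nat \<Rightarrow> nat) \<Rightarrow> 'a) \<Rightarrow> (nat \<Rightarrow> nat) \<Rightarrow> 'a" where
  "lift q G \<alpha> = coeff q (\<alpha> 0) * G (pdrop \<alpha>)"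

lemma lift_support:
  "{\<alpha>. lift q G \<alpha> \<noteq> 0} \<subseteq> (\<lambda>(j, \<delta>). ccons j \<delta>) ` ({..degree q} \<times> {\<delta>. G \<delta> \<noteq> 0})"
proof
  fix \<alpha> assume "\<alpha> \<in> {\<alpha>. lift q G \<alpha> \<noteq> 0}"
  then have "coeff q (\<alpha> 0) \<noteq> 0" "G (pdrop \<alpha>) \<noteq> 0" by (auto simp: lift_def)
  then show "\<alpha> \<in> (\<lambda>(j, \<delta>). ccons j \<delta>) ` ({..degree q} \<times> {\<delta>. G \<delta> \<noteq> 0})"
    by (auto simp: le_degree intro!: image_eqI[of _ _ "(\<alpha> 0, pdrop \<alpha>)"])
qed

lemma lift_polys:
  assumes "G \<in> polys m"
  shows "lift q G \<in> polys (Suc m)"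
  unfolding polys_def
proof (intro CollectI conjI)
  show "finite {\<alpha>. lift q G \<alpha> \<noteq> 0}"
    by (rule finite_subset[OF lift_support]) (use assms in \<open>auto simp: polys_def\<close>)
  show "{\<alpha>. lift q G \<alpha> \<noteq> 0} \<subseteq> expn (Suc m)"
  proof
    fix \<alpha> assume "\<alpha> \<in> {\<alpha>. lift q G \<alpha> \<noteq> 0}"
    then have "pdrop \<alpha> \<in> expn m" using assms by (auto simp: lift_def polys_def)
    then show "\<alpha> \<in> expn (Suc m)" by (simp add: expn_Suc)
  qed
qed

lemma peval_lift:
  assumes "G \<in> polys m"
  shows "peval (Suc m) (lift q G) (ccons x a) = poly q x * peval m G a"
proof -
  define S where "S = {..degree q} \<times> {\<delta>. G \<delta> \<noteq> 0}"
  have finS: "finite S" using assms by (auto simp: S_def polys_def)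
  have inj: "inj_on (\<lambda>(j, \<delta>). ccons j \<delta>) S"
    by (auto simp: inj_on_def ccons_eq_iff)
  have "peval (Suc m) (lift q G) (ccons x a) =
     (\<Sum>\<alpha>\<in>(\<lambda>(j, \<delta>). ccons j \<delta>) ` S. lift q G \<alpha> * pmono (Suc m) (ccons x a) \<alpha>)"
    by (rule peval_superset) (use finS lift_support S_def in auto)
  also have "\<dots> = (\<Sum>(j, \<delta>)\<in>S. (coeff q j * x ^ j) * (G \<delta> * pmono m a \<delta>))"
    by (subst sum.reindex[OF inj]) (auto simp: lift_def pmono_Suc intro!: sum.cong)
  also have "\<dots> = (\<Sum>j\<le>degree q. coeff q j * x ^ j) * (\<Sum>\<delta>\<in>{\<delta>. G \<delta> \<noteq> 0}. G \<delta> * pmono m a \<delta>)"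
    unfolding S_def by (simp add: sum_product sum.cartesian_product)
  also have "\<dots> = poly q x * peval m G a"
    by (simp add: poly_altdef peval_def pmono_def)
  finally show ?thesis .
qed

definition strict_total_on :: "'b set \<Rightarrow> ('b \<Rightarrow> 'b \<Rightarrow> bool) \<Rightarrow> bool" where
  "strict_total_on E lt \<longleftrightarrow> (\<forall>x\<in>E. \<not> lt x x) \<and>
     (\<forall>x\<in>E. \<forall>y\<in>E. \<forall>z\<in>E. lt x y \<longrightarrow> lt y z \<longrightarrow> lt x z) \<and>
     (\<forall>x\<in>E. \<forall>y\<in>E. x \<noteq> y \<longrightarrow> lt x y \<or> lt y x)"

lemma strict_total_on_irrefl: "strict_total_on E lt \<Longrightarrow> x \<in> E \<Longrightarrow> \<not> lt x x"
  unfolding strict_total_on_def by blast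

lemma strict_total_on_trans:
  "strict_total_on E lt \<Longrightarrow> x \<in> E \<Longrightarrow> y \<in> E \<Longrightarrow> z \<in> E \<Longrightarrow> lt x y \<Longrightarrow> lt y z \<Longrightarrow> lt x z"
  unfolding strict_total_on_def by blast

lemma strict_total_on_total:
  "strict_total_on E lt \<Longrightarrow> x \<in> E \<Longrightarrow> y \<in> E \<Longrightarrow> x \<noteq> y \<Longrightarrow> lt x y \<or> lt y x"
  unfolding strict_total_on_def by blast

lemma strict_total_on_max:
  assumes "strict_total_on E lt" "finite S" "S \<noteq> {}" "S \<subseteq> E"
  shows "\<exists>x\<in>S. \<forall>y\<in>S. y = x \<or> lt y x"
  using assms(2,3,4)
proof (induction S rule: finite_ne_induct)
  case (singleton x)
  then show ?case by simp
next
  case (insert x F)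
  then obtain z where z: "z \<in> F" "\<forall>y\<in>F. y = z \<or> lt y z" by auto
  have E: "x \<in> E" "z \<in> E" "F \<subseteq> E" using insert z by auto
  show ?case
  proof (cases "lt z x")
    case True
    have "\<forall>y\<in>F. lt y x"
    proof
      fix y assume "y \<in> F"
      then have "y = z \<or> lt y z" "y \<in> E" using z E(3) by auto
      then show "lt y x" using True strict_total_on_trans[OF assms(1) _ E(2,1)] by blast
    qed
    then show ?thesis by blast
  next
    case False
    then have "x = z \<or> lt x z" using strict_total_on_total[OF assms(1) E(1,2)] by blast
    then show ?thesis using z by blast
  qed
qed

lemma LE_eqI:
  assumes "strict_total_on E lt" "{\<alpha>. f \<alpha> \<noteq> 0} \<subseteq> E" "f \<beta> \<noteq> 0"
    "\<forall>\<alpha>. f \<alpha> \<noteq> 0 \<longrightarrow> \<alpha> = \<beta> \<or> lt \<alpha> \<beta>"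
  shows "LE lt f = \<beta>"
  unfolding LE_def
proof (rule the_equality)
  show "f \<beta> \<noteq> 0 \<and> (\<forall>\<gamma>. f \<gamma> \<noteq> 0 \<longrightarrow> \<gamma> = \<beta> \<or> lt \<gamma> \<beta>)" using assms(3,4) by blast
  fix x assume x: "f x \<noteq> 0 \<and> (\<forall>\<gamma>. f \<gamma> \<noteq> 0 \<longrightarrow> \<gamma> = x \<or> lt \<gamma> x)"
  show "x = \<beta>"
  proof (rule ccontr)
    assume ne: "x \<noteq> \<beta>"
    then have "lt x \<beta>" "lt \<beta> x" using x assms(3,4) by blast+
    moreover have "x \<in> E" "\<beta> \<in> E" using x assms(2,3) by auto
    ultimately show False
      using strict_total_on_trans[OF assms(1), of \<beta> x \<beta>] strict_total_on_irrefl[OF assms(1)] by blast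
  qed
qed

lemma LE_props:
  assumes "strict_total_on (expn m) lt" "f \<in> polys m" "f \<noteq> (\<lambda>_. 0)"
  shows "f (LE lt f) \<noteq> 0" "\<forall>\<alpha>. f \<alpha> \<noteq> 0 \<longrightarrow> \<alpha> = LE lt f \<or> lt \<alpha> (LE lt f)"
proof -
  have supp: "finite {\<alpha>. f \<alpha> \<noteq> 0}" "{\<alpha>. f \<alpha> \<noteq> 0} \<subseteq> expn m" "{\<alpha>. f \<alpha> \<noteq> 0} \<noteq> {}"
    using assms(2,3) by (auto simp: polys_def)
  obtain x where x: "f x \<noteq> 0" "\<forall>y. f y \<noteq> 0 \<longrightarrow> y = x \<or> lt y x"
    using strict_total_on_max[OF assms(1) supp(1,3,2)] by blast
  have "LE lt f = x" by (rule LE_eqI[OF assms(1) supp(2) x])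
  then show "f (LE lt f) \<noteq> 0" "\<forall>\<alpha>. f \<alpha> \<noteq> 0 \<longrightarrow> \<alpha> = LE lt f \<or> lt \<alpha> (LE lt f)" using x by auto
qed

lemma product_order_strict_total:
  "product_order (Suc m) lt \<Longrightarrow> strict_total_on (expn (Suc m)) lt"
  unfolding product_order_def term_order_def strict_total_on_def by blast

lemma restr_order_strict_total:
  assumes "product_order (Suc m) lt"
  shows "strict_total_on (expn m) (restr_order lt)"
proof -
  have tot: "strict_total_on (expn (Suc m)) lt" by (rule product_order_strict_total[OF assms])
  have E: "shift0 x \<in> expn (Suc m) \<longleftrightarrow> x \<in> expn m" for x
    by (simp add: shift0_eq_ccons expn_Suc)
  have inj: "shift0 x = shift0 y \<Longrightarrow> x = y" for x y
    by (simp add: shift0_eq_ccons ccons_eq_iff)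
  show ?thesis
    unfolding strict_total_on_def restr_order_def
  proof (intro conjI ballI impI)
    fix x assume "x \<in> expn m"
    then show "\<not> lt (shift0 x) (shift0 x)" using strict_total_on_irrefl[OF tot] E by blast
  next
    fix x y z assume "x \<in> expn m" "y \<in> expn m" "z \<in> expn m"
      "lt (shift0 x) (shift0 y)" "lt (shift0 y) (shift0 z)"
    then show "lt (shift0 x) (shift0 z)" using strict_total_on_trans[OF tot] E by blast
  next
    fix x y assume "x \<in> expn m" "y \<in> expn m" "x \<noteq> y"
    then show "lt (shift0 x) (shift0 y) \<or> lt (shift0 y) (shift0 x)"
      using strict_total_on_total[OF tot] E inj by metis
  qed
qed

lemma product_order_less_iff:
  assumes "product_order (Suc m) lt" "\<alpha> \<in> expn (Suc m)" "\<beta> \<in> expn (Suc m)"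
  shows "lt \<alpha> \<beta> \<longleftrightarrow> restr_order lt (pdrop \<alpha>) (pdrop \<beta>) \<or> (pdrop \<alpha> = pdrop \<beta> \<and> \<alpha> 0 < \<beta> 0)"
  using assms unfolding product_order_def by blast

definition first_coords :: "(nat \<Rightarrow> 'b) set \<Rightarrow> 'b set" where
  "first_coords A = {a 0 | a. a \<in> A}"

definition slice :: "(nat \<Rightarrow> 'b) set \<Rightarrow> 'b \<Rightarrow> (nat \<Rightarrow> 'b) set" where
  "slice A c = {pdrop a | a. a \<in> A \<and> a 0 = c}"

text \<open>For a polynomial f in X_1, ..., X_n: fiber f c is f(c, X_2, ..., X_n), and column f delta
  is the coefficient of X'^delta in f viewed as a univariate polynomial in X_1, so that
  its value at c is the coefficient of X'^delta in fiber f c.\<close>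

definition fiber :: "((nat \<Rightarrow> nat) \<Rightarrow> 'a::comm_ring_1) \<Rightarrow> 'a \<Rightarrow> (nat \<Rightarrow> nat) \<Rightarrow> 'a" where
  "fiber f c \<delta> = (\<Sum>\<alpha>\<in>{\<alpha>. f \<alpha> \<noteq> 0 \<and> pdrop \<alpha> = \<delta>}. f \<alpha> * c ^ \<alpha> 0)"

definition column :: "((nat \<Rightarrow> nat) \<Rightarrow> 'a::comm_ring_1) \<Rightarrow> (nat \<Rightarrow> nat) \<Rightarrow> 'a poly" where
  "column f \<delta> = (\<Sum>\<alpha>\<in>{\<alpha>. f \<alpha> \<noteq> 0 \<and> pdrop \<alpha> = \<delta>}. monom (f \<alpha>) (\<alpha> 0))"

lemma poly_column: "poly (column f \<delta>) c = fiber f c \<delta>"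
  by (simp add: column_def fiber_def poly_sum poly_monom)

lemma coeff_column:
  assumes "finite {\<alpha>. f \<alpha> \<noteq> 0}"
  shows "coeff (column f \<delta>) k = f (ccons k \<delta>)"
proof -
  have fin: "finite {\<alpha>. f \<alpha> \<noteq> 0 \<and> pdrop \<alpha> = \<delta>}" using assms by (rule finite_subset[rotated]) auto
  have "coeff (column f \<delta>) k = (\<Sum>\<alpha>\<in>{\<alpha>. f \<alpha> \<noteq> 0 \<and> pdrop \<alpha> = \<delta>}. if \<alpha> = ccons k \<delta> then f \<alpha> else 0)"
    unfolding column_def coeff_sum coeff_monom
    by (rule sum.cong[OF refl]) (auto simp: ccons_eq_iff)
  also have "\<dots> = f (ccons k \<delta>)" using fin by (simp add: sum.delta')
  finally show ?thesis .
qed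

lemma fiber_support: "fiber f c \<delta> \<noteq> 0 \<Longrightarrow> \<exists>\<alpha>. f \<alpha> \<noteq> 0 \<and> pdrop \<alpha> = \<delta>"
  unfolding fiber_def by (metis (mono_tags, lifting) empty_Collect_eq sum.empty)

lemma fiber_polys:
  assumes "f \<in> polys (Suc m)"
  shows "fiber f c \<in> polys m"
proof -
  have "{\<delta>. fiber f c \<delta> \<noteq> 0} \<subseteq> pdrop ` {\<alpha>. f \<alpha> \<noteq> 0}" using fiber_support by blast
  moreover have "pdrop ` {\<alpha>. f \<alpha> \<noteq> 0} \<subseteq> expn m" using assms by (auto simp: polys_def expn_Suc)
  ultimately show ?thesis using assms unfolding polys_def by (auto intro: finite_subset)
qed

lemma peval_fiber:
  assumes "f \<in> polys (Suc m)"
  shows "peval m (fiber f c) a = peval (Suc m) f (ccons c a)"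
proof -
  define F where "F = {\<alpha>. f \<alpha> \<noteq> 0}"
  have fin: "finite F" using assms by (simp add: F_def polys_def)
  have "peval m (fiber f c) a = (\<Sum>\<delta>\<in>pdrop ` F. fiber f c \<delta> * pmono m a \<delta>)"
    using fin by (intro peval_superset) (auto simp: F_def dest!: fiber_support)
  also have "\<dots> = (\<Sum>\<delta>\<in>pdrop ` F. \<Sum>\<alpha>\<in>{\<alpha>\<in>F. pdrop \<alpha> = \<delta>}. f \<alpha> * pmono (Suc m) (ccons c a) \<alpha>)"
    by (rule sum.cong[OF refl])
      (auto simp: F_def fiber_def sum_distrib_right pmono_Suc intro!: sum.cong)
  also have "\<dots> = (\<Sum>\<alpha>\<in>F. f \<alpha> * pmono (Suc m) (ccons c a) \<alpha>)"
    by (rule sum.group) (use fin in auto)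
  also have "\<dots> = peval (Suc m) f (ccons c a)"
    by (rule peval_superset[symmetric]) (use fin F_def in auto)
  finally show ?thesis .
qed

lemma fiber_vanishing:
  assumes "f \<in> vanishing_ideal (Suc m) A"
  shows "fiber f c \<in> vanishing_ideal m (slice A c)"
proof -
  have f: "f \<in> polys (Suc m)" "\<forall>a\<in>A. peval (Suc m) f a = 0"
    using assms by (auto simp: vanishing_ideal_def)
  have "peval m (fiber f c) a' = 0" if a': "a' \<in> slice A c" for a'
  proof -
    obtain a where "a \<in> A" "a 0 = c" "a' = pdrop a" using a' unfolding slice_def by blast
    then have "a = ccons c a'" by (simp add: ccons_eq_iff)
    then show ?thesis using f \<open>a \<in> A\<close> by (simp add: peval_fiber)
  qed
  then show ?thesis using fiber_polys[OF f(1)] by (simp add: vanishing_ideal_def)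
qed

text \<open>Let f vanish on A with leading exponent beta and gamma = p(beta).  If gamma is standard
  for the slice A_c, then the coefficient of X'^gamma in f(c, X') vanishes: otherwise this
  coefficient makes f(c, X') a polynomial vanishing on A_c with leading exponent gamma.\<close>

lemma leading_column_vanishes:
  assumes po: "product_order (Suc m) lt"
    and f: "f \<in> vanishing_ideal (Suc m) A" "f \<noteq> (\<lambda>_. 0)"
    and D: "pdrop (LE lt f) \<in> Dset m (restr_order lt) (slice A c)"
  shows "poly (column f (pdrop (LE lt f))) c = 0"
proof (rule ccontr)
  define \<beta> where "\<beta> = LE lt f"
  define \<gamma> where "\<gamma> = pdrop \<beta>"
  have fp: "f \<in> polys (Suc m)" using f(1) by (simp add: vanishing_ideal_def)
  have lead: "f \<beta> \<noteq> 0" "\<forall>\<alpha>. f \<alpha> \<noteq> 0 \<longrightarrow> \<alpha> = \<beta> \<or> lt \<alpha> \<beta>"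
    using LE_props[OF product_order_strict_total[OF po] fp f(2)] by (simp_all add: \<beta>_def)
  have expn: "f \<alpha> \<noteq> 0 \<Longrightarrow> \<alpha> \<in> expn (Suc m)" for \<alpha> using fp by (auto simp: polys_def)
  assume "poly (column f (pdrop (LE lt f))) c \<noteq> 0"
  then have nz: "fiber f c \<gamma> \<noteq> 0" by (simp add: poly_column \<gamma>_def \<beta>_def)
  have "LE (restr_order lt) (fiber f c) = \<gamma>"
  proof (rule LE_eqI[OF restr_order_strict_total[OF po]])
    show "{\<delta>. fiber f c \<delta> \<noteq> 0} \<subseteq> expn m" using fiber_polys[OF fp] by (simp add: polys_def)
    show "fiber f c \<gamma> \<noteq> 0" by (rule nz)
    show "\<forall>\<delta>. fiber f c \<delta> \<noteq> 0 \<longrightarrow> \<delta> = \<gamma> \<or> restr_order lt \<delta> \<gamma>"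
    proof (intro allI impI)
      fix \<delta> assume "fiber f c \<delta> \<noteq> 0"
      then obtain \<alpha> where "f \<alpha> \<noteq> 0" "pdrop \<alpha> = \<delta>" using fiber_support by blast
      then show "\<delta> = \<gamma> \<or> restr_order lt \<delta> \<gamma>"
        using lead(2) product_order_less_iff[OF po expn expn[OF lead(1)]] \<gamma>_def by blast
    qed
  qed
  moreover have "fiber f c \<noteq> (\<lambda>_. 0)" using nz by auto
  ultimately have "\<gamma> \<in> Cset m (restr_order lt) (slice A c)"
    using fiber_vanishing[OF f(1)] unfolding Cset_def by blast
  then show False using D by (simp add: Dset_def \<gamma>_def \<beta>_def)
qed


text \<open>First inclusion D(A) containing the right-hand side, in contrapositive form: the
  leading exponent beta of a polynomial vanishing on A satisfies
  beta_1 >= #{c in Y. p(beta) in D(A_c)}, since every such c is a root of the nonzero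
  polynomial column f gamma, whose degree is at most beta_1 by maximality of beta.\<close>

lemma slice_count_le_leading_exponent:
  fixes A :: "(nat \<Rightarrow> 'a::idom) set"
  assumes po: "product_order (Suc m) lt"
    and f: "f \<in> vanishing_ideal (Suc m) A" "f \<noteq> (\<lambda>_. 0)"
  shows "card {c \<in> first_coords A. pdrop (LE lt f) \<in> Dset m (restr_order lt) (slice A c)}
    \<le> LE lt f 0"
proof -
  define \<beta> where "\<beta> = LE lt f"
  define \<gamma> where "\<gamma> = pdrop \<beta>"
  have fp: "f \<in> polys (Suc m)" using f(1) by (simp add: vanishing_ideal_def)
  have lead: "f \<beta> \<noteq> 0" "\<forall>\<alpha>. f \<alpha> \<noteq> 0 \<longrightarrow> \<alpha> = \<beta> \<or> lt \<alpha> \<beta>"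
    using LE_props[OF product_order_strict_total[OF po] fp f(2)] by (simp_all add: \<beta>_def)
  have expn: "f \<alpha> \<noteq> 0 \<Longrightarrow> \<alpha> \<in> expn (Suc m)" for \<alpha> using fp by (auto simp: polys_def)
  have coeff: "coeff (column f \<gamma>) k = f (ccons k \<gamma>)" for k
    using fp by (simp add: coeff_column polys_def)
  have "coeff (column f \<gamma>) (\<beta> 0) \<noteq> 0" using lead(1) coeff[of "\<beta> 0"] by (simp add: \<gamma>_def)
  then have col_nz: "column f \<gamma> \<noteq> 0" by auto
  have "degree (column f \<gamma>) \<le> \<beta> 0"
  proof (rule degree_le, intro allI impI)
    fix k assume k: "\<beta> 0 < k"
    show "coeff (column f \<gamma>) k = 0"
    proof (rule ccontr)
      assume "coeff (column f \<gamma>) k \<noteq> 0"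
      then have nz: "f (ccons k \<gamma>) \<noteq> 0" by (simp add: coeff)
      have "\<gamma> \<in> expn m" using expn[OF lead(1)] by (simp add: \<gamma>_def expn_Suc)
      then have "\<not> restr_order lt \<gamma> \<gamma>"
        using strict_total_on_irrefl[OF restr_order_strict_total[OF po]] by blast
      then have "\<not> lt (ccons k \<gamma>) \<beta>"
        using product_order_less_iff[OF po expn[OF nz] expn[OF lead(1)]] k by (simp add: \<gamma>_def)
      moreover have "ccons k \<gamma> \<noteq> \<beta>" using k by (auto simp: ccons_eq_iff)
      ultimately show False using lead(2) nz by blast
    qed
  qed
  have "{c \<in> first_coords A. \<gamma> \<in> Dset m (restr_order lt) (slice A c)} \<subseteq> {c. poly (column f \<gamma>) c = 0}"
    using leading_column_vanishes[OF po f] by (auto simp: \<gamma>_def \<beta>_def)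
  then have "card {c \<in> first_coords A. \<gamma> \<in> Dset m (restr_order lt) (slice A c)}
      \<le> card {c. poly (column f \<gamma>) c = 0}"
    by (rule card_mono[OF poly_roots_finite[OF col_nz]])
  also have "\<dots> \<le> degree (column f \<gamma>)" by (rule card_poly_roots_bound[OF col_nz])
  also have "\<dots> \<le> \<beta> 0" by fact
  finally show ?thesis by (simp add: \<gamma>_def \<beta>_def)
qed

lemma reduce_leading_monomial:
  fixes B :: "(nat \<Rightarrow> 'a::field) set"
  assumes tot: "strict_total_on (expn m) lt" and "\<gamma> \<in> Cset m lt B"
  obtains G where "G \<in> polys m" "\<forall>\<delta>. G \<delta> \<noteq> 0 \<longrightarrow> lt \<delta> \<gamma>"
    "\<forall>a\<in>B. peval m G a = - pmono m a \<gamma>"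
proof -
  obtain g where g: "g \<in> vanishing_ideal m B" "g \<noteq> (\<lambda>_. 0)" "LE lt g = \<gamma>"
    using assms(2) unfolding Cset_def by blast
  have gp: "g \<in> polys m" using g(1) by (simp add: vanishing_ideal_def)
  have lead: "g \<gamma> \<noteq> 0" "\<forall>\<delta>. g \<delta> \<noteq> 0 \<longrightarrow> \<delta> = \<gamma> \<or> lt \<delta> \<gamma>"
    using LE_props[OF tot gp g(2)] g(3) by simp_all
  have \<gamma>E: "\<gamma> \<in> expn m" using gp lead(1) by (auto simp: polys_def)
  define G where "G = (\<lambda>\<delta>. (1 / g \<gamma>) * g \<delta> + (-1) * monomial \<gamma> \<delta>)"
  have "G \<in> polys m" unfolding G_def by (rule polys_lin[OF gp monomial_polys[OF \<gamma>E]])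
  moreover have "\<forall>\<delta>. G \<delta> \<noteq> 0 \<longrightarrow> lt \<delta> \<gamma>"
    using lead by (auto simp: G_def monomial_def)
  moreover have "\<forall>a\<in>B. peval m G a = - pmono m a \<gamma>"
    using g(1) unfolding G_def peval_lin[OF gp monomial_polys[OF \<gamma>E]]
    by (simp add: peval_monomial vanishing_ideal_def)
  ultimately show ?thesis using that by blast
qed

lemma lagrange_basis:
  fixes T :: "'a::field set"
  assumes "finite T"
  obtains L where "\<forall>\<mu>\<in>T. \<forall>c\<in>T. poly (L \<mu>) c = (if \<mu> = c then 1 else 0)"
proof -
  define L where "L \<mu> = smult (1 / (\<Prod>\<nu>\<in>T - {\<mu>}. \<mu> - \<nu>)) (\<Prod>\<nu>\<in>T - {\<mu>}. [:-\<nu>, 1:])" for \<mu>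
  have "poly (L \<mu>) c = (if \<mu> = c then 1 else 0)" if "\<mu> \<in> T" "c \<in> T" for \<mu> c
  proof -
    have L_eval: "poly (L \<mu>) c = (\<Prod>\<nu>\<in>T - {\<mu>}. c - \<nu>) / (\<Prod>\<nu>\<in>T - {\<mu>}. \<mu> - \<nu>)"
      by (simp add: L_def poly_prod)
    show ?thesis
    proof (cases "\<mu> = c")
      case True
      have "(\<Prod>\<nu>\<in>T - {\<mu>}. \<mu> - \<nu>) \<noteq> 0" using assms by (simp add: prod_zero_iff)
      then show ?thesis using L_eval True by simp
    next
      case False
      then have "(\<Prod>\<nu>\<in>T - {\<mu>}. c - \<nu>) = 0" using assms that(2) by (simp add: prod_zero_iff)
      then show ?thesis using L_eval False by simp
    qed
  qed
  then show ?thesis using that by blast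
qed

lemma poly_vanishing_on_with_degree:
  fixes S :: "'a::field set"
  assumes "finite S" "card S \<le> k"
  obtains q where "q \<noteq> 0" "degree q = k" "\<forall>c\<in>S. poly q c = 0"
proof -
  define r where "r = (\<Prod>c\<in>S. [:-c, 1:])"
  define q where "q = monom 1 (k - card S) * r"
  have r0: "r \<noteq> 0" unfolding r_def using assms(1) by (simp add: prod_zero_iff)
  have "degree r = card S" unfolding r_def by (subst degree_prod_eq_sum_degree) auto
  then have "degree q = k" using r0 assms(2) by (simp add: q_def degree_mult_eq degree_monom_eq)
  moreover have "q \<noteq> 0" using r0 by (simp add: q_def)
  moreover have "\<forall>c\<in>S. poly q c = 0"
    using assms(1) by (simp add: q_def r_def poly_prod prod_zero_iff)
  ultimately show ?thesis using that by blast
qed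

lemma leading_exponent_lift_sum:
  fixes q :: "'a::idom poly" and h :: "'b \<Rightarrow> 'a poly"
  assumes po: "product_order (Suc m) lt" and \<gamma>E: "\<gamma> \<in> expn m" and "q \<noteq> 0" "finite T"
    and G: "\<forall>\<mu>\<in>T. G \<mu> \<in> polys m" "\<forall>\<mu>\<in>T. \<forall>\<delta>. G \<mu> \<delta> \<noteq> 0 \<longrightarrow> restr_order lt \<delta> \<gamma>"
  defines "f \<equiv> \<lambda>\<alpha>. lift q (monomial \<gamma>) \<alpha> + (\<Sum>\<mu>\<in>T. lift (h \<mu>) (G \<mu>) \<alpha>)"
  shows "f \<in> polys (Suc m)" "f (ccons (degree q) \<gamma>) \<noteq> 0" "LE lt f = ccons (degree q) \<gamma>"
proof -
  define \<beta> where "\<beta> = ccons (degree q) \<gamma>"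
  have \<beta>E: "\<beta> \<in> expn (Suc m)" using \<gamma>E by (simp add: \<beta>_def expn_Suc)
  have "(\<lambda>\<alpha>. \<Sum>\<mu>\<in>T. lift (h \<mu>) (G \<mu>) \<alpha>) \<in> polys (Suc m)"
    using assms(4) G(1) lift_polys by (intro polys_sum) auto
  then show fp: "f \<in> polys (Suc m)"
    unfolding f_def by (rule polys_add[OF lift_polys[OF monomial_polys[OF \<gamma>E]]])
  have G\<gamma>: "G \<mu> \<gamma> = 0" if "\<mu> \<in> T" for \<mu>
    using G(2) that strict_total_on_irrefl[OF restr_order_strict_total[OF po] \<gamma>E] by blast
  have "f \<beta> = lead_coeff q" using G\<gamma> by (simp add: f_def lift_def monomial_def \<beta>_def)
  then show f\<beta>: "f (ccons (degree q) \<gamma>) \<noteq> 0" using assms(3) by (simp add: \<beta>_def)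
  show "LE lt f = ccons (degree q) \<gamma>"
    unfolding \<beta>_def[symmetric]
  proof (rule LE_eqI[OF product_order_strict_total[OF po]])
    show supp: "{\<alpha>. f \<alpha> \<noteq> 0} \<subseteq> expn (Suc m)" using fp by (simp add: polys_def)
    show "f \<beta> \<noteq> 0" using f\<beta> by (simp add: \<beta>_def)
    show "\<forall>\<alpha>. f \<alpha> \<noteq> 0 \<longrightarrow> \<alpha> = \<beta> \<or> lt \<alpha> \<beta>"
    proof (intro allI impI)
      fix \<alpha> assume f\<alpha>: "f \<alpha> \<noteq> 0"
      have less_iff: "lt \<alpha> \<beta> \<longleftrightarrow> restr_order lt (pdrop \<alpha>) \<gamma> \<or> (pdrop \<alpha> = \<gamma> \<and> \<alpha> 0 < degree q)"
        using product_order_less_iff[OF po _ \<beta>E] supp f\<alpha> by (auto simp: \<beta>_def)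
      show "\<alpha> = \<beta> \<or> lt \<alpha> \<beta>"
      proof (cases "lift q (monomial \<gamma>) \<alpha> = 0")
        case False
        then have "coeff q (\<alpha> 0) \<noteq> 0" "pdrop \<alpha> = \<gamma>"
          by (auto simp: lift_def monomial_def split: if_splits)
        then show ?thesis using le_degree[of q "\<alpha> 0"] less_iff by (auto simp: \<beta>_def ccons_eq_iff)
      next
        case True
        then have "(\<Sum>\<mu>\<in>T. lift (h \<mu>) (G \<mu>) \<alpha>) \<noteq> 0" using f\<alpha> by (simp add: f_def)
        then obtain \<mu> where "\<mu> \<in> T" "lift (h \<mu>) (G \<mu>) \<alpha> \<noteq> 0" by (meson sum.neutral)
        then have "restr_order lt (pdrop \<alpha>) \<gamma>" using G(2) by (auto simp: lift_def)
        then show ?thesis using less_iff by blast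
      qed
    qed
  qed
qed

text \<open>With S the counted slices and T the others, take q of degree beta_1
  vanishing on S, for mu in T a reduction X'^gamma = -G_mu on A_mu, and Lagrange
  polynomials L_mu on T; then q(X_1) (X'^gamma + sum_mu L_mu(X_1) G_mu(X')) vanishes on A
  and has leading exponent beta.\<close>

lemma leading_exponent_of_slice_count:
  fixes A :: "(nat \<Rightarrow> 'a::field) set"
  assumes po: "product_order (Suc m) lt" and fin: "finite (first_coords A)"
    and \<beta>E: "\<beta> \<in> expn (Suc m)"
    and count: "card {c \<in> first_coords A. pdrop \<beta> \<in> Dset m (restr_order lt) (slice A c)} \<le> \<beta> 0"
  shows "\<beta> \<in> Cset (Suc m) lt A"
proof -
  define \<gamma> where "\<gamma> = pdrop \<beta>"
  define S where "S = {c \<in> first_coords A. \<gamma> \<in> Dset m (restr_order lt) (slice A c)}"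
  define T where "T = first_coords A - S"
  have \<gamma>E: "\<gamma> \<in> expn m" using \<beta>E by (simp add: \<gamma>_def expn_Suc)
  have "\<exists>G. G \<in> polys m \<and> (\<forall>\<delta>. G \<delta> \<noteq> 0 \<longrightarrow> restr_order lt \<delta> \<gamma>) \<and>
      (\<forall>a\<in>slice A \<mu>. peval m G a = - pmono m a \<gamma>)" if "\<mu> \<in> T" for \<mu>
  proof -
    have "\<gamma> \<in> Cset m (restr_order lt) (slice A \<mu>)"
      using that \<gamma>E by (simp add: T_def S_def Dset_def)
    then show ?thesis
      by (rule reduce_leading_monomial[OF restr_order_strict_total[OF po]]) blast
  qed
  then obtain G where G: "\<forall>\<mu>\<in>T. G \<mu> \<in> polys m" "\<forall>\<mu>\<in>T. \<forall>\<delta>. G \<mu> \<delta> \<noteq> 0 \<longrightarrow> restr_order lt \<delta> \<gamma>"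
      "\<forall>\<mu>\<in>T. \<forall>a\<in>slice A \<mu>. peval m (G \<mu>) a = - pmono m a \<gamma>"
    by metis
  have finT: "finite T" using fin by (simp add: T_def)
  obtain L where L: "\<forall>\<mu>\<in>T. \<forall>c\<in>T. poly (L \<mu>) c = (if \<mu> = c then 1 else 0)"
    using lagrange_basis[OF finT] by blast
  obtain q where q: "q \<noteq> 0" "degree q = \<beta> 0" "\<forall>c\<in>S. poly q c = 0"
    using poly_vanishing_on_with_degree[of S "\<beta> 0"] fin count by (auto simp: S_def \<gamma>_def)
  define f where "f = (\<lambda>\<alpha>. lift q (monomial \<gamma>) \<alpha> + (\<Sum>\<mu>\<in>T. lift (q * L \<mu>) (G \<mu>) \<alpha>))"
  have \<beta>: "ccons (degree q) \<gamma> = \<beta>" using q(2) by (simp add: \<gamma>_def ccons_eq_iff)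
  note lead = leading_exponent_lift_sum[OF po \<gamma>E q(1) finT G(1,2), where h = "\<lambda>\<mu>. q * L \<mu>",
      folded f_def, unfolded \<beta>]
  have "peval (Suc m) f a = 0" if "a \<in> A" for a
  proof -
    define c where "c = a 0"
    define a' where "a' = pdrop a"
    have a: "a = ccons c a'" by (simp add: c_def a'_def)
    have lifts: "lift q (monomial \<gamma>) \<in> polys (Suc m)" "\<forall>\<mu>\<in>T. lift (q * L \<mu>) (G \<mu>) \<in> polys (Suc m)"
      using lift_polys monomial_polys[OF \<gamma>E] G(1) by blast+
    have eval: "peval (Suc m) f a =
        poly q c * pmono m a' \<gamma> + (\<Sum>\<mu>\<in>T. poly q c * poly (L \<mu>) c * peval m (G \<mu>) a')"
      using G(1) unfolding a f_def peval_add[OF lifts(1) polys_sum[OF finT lifts(2)]]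
      by (simp add: peval_sum[OF finT lifts(2)] peval_lift monomial_polys[OF \<gamma>E] peval_monomial)
    show ?thesis
    proof (cases "c \<in> S")
      case True
      then show ?thesis using eval q(3) by simp
    next
      case False
      then have cT: "c \<in> T" using that by (auto simp: T_def c_def first_coords_def)
      have a'_in: "a' \<in> slice A c" using that by (auto simp: slice_def c_def a'_def)
      have "(\<Sum>\<mu>\<in>T. poly q c * poly (L \<mu>) c * peval m (G \<mu>) a') =
          (\<Sum>\<mu>\<in>T. if \<mu> = c then poly q c * peval m (G c) a' else 0)"
        by (rule sum.cong) (use L cT in auto)
      also have "\<dots> = - (poly q c * pmono m a' \<gamma>)"
        using finT cT G(3) a'_in by simp
      finally show ?thesis using eval by simp
    qed
  qed
  then have "f \<in> vanishing_ideal (Suc m) A" using lead(1) by (simp add: vanishing_ideal_def)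
  moreover have "f \<noteq> (\<lambda>_. 0)" using lead(2) by (metis f_def)
  ultimately show ?thesis using lead(3) unfolding Cset_def by blast
qed

theorem standard_set_slice_sum:
  fixes A :: "(nat \<Rightarrow> 'a::field) set"
  assumes po: "product_order (Suc m) lt" and fin: "finite (first_coords A)"
  shows "Dset (Suc m) lt A = {\<beta> \<in> expn (Suc m).
    \<beta> 0 < card {c \<in> first_coords A. pdrop \<beta> \<in> Dset m (restr_order lt) (slice A c)}}"
proof (rule set_eqI)
  fix \<beta>
  let ?count = "card {c \<in> first_coords A. pdrop \<beta> \<in> Dset m (restr_order lt) (slice A c)}"
  have "\<beta> \<in> Dset (Suc m) lt A \<longleftrightarrow> \<beta> \<in> expn (Suc m) \<and> \<beta> 0 < ?count"
  proof (cases "\<beta> \<in> expn (Suc m)")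
    case True
    have "\<beta> \<in> Cset (Suc m) lt A \<longleftrightarrow> ?count \<le> \<beta> 0"
    proof
      assume "\<beta> \<in> Cset (Suc m) lt A"
      then obtain f where "f \<in> vanishing_ideal (Suc m) A" "f \<noteq> (\<lambda>_. 0)" "\<beta> = LE lt f"
        unfolding Cset_def by blast
      then show "?count \<le> \<beta> 0" using slice_count_le_leading_exponent[OF po] by blast
    next
      assume "?count \<le> \<beta> 0"
      then show "\<beta> \<in> Cset (Suc m) lt A" by (rule leading_exponent_of_slice_count[OF po fin True])
    qed
    then show ?thesis using True by (auto simp: Dset_def not_le)
  qed (simp add: Dset_def)
  then show "\<beta> \<in> Dset (Suc m) lt A \<longleftrightarrow> \<beta> \<in> {\<beta> \<in> expn (Suc m).
    \<beta> 0 < card {c \<in> first_coords A. pdrop \<beta> \<in> Dset m (restr_order lt) (slice A c)}}" by simp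
qed

text \<open>The theorem: by affine_plane_first_coordinate_const the first coordinate is constant
  on every component, so A has finitely many first coordinates and standard_set_slice_sum
  applies.\<close>

theorem mainTheorem5:
  fixes lt :: "(nat \<Rightarrow> nat) \<Rightarrow> (nat \<Rightarrow> nat) \<Rightarrow> bool"
    and \<P> :: "(nat \<Rightarrow> 'a::field) set set"
    and A :: "(nat \<Rightarrow> 'a) set"
    and n d :: nat
  assumes "infinite (UNIV :: 'a set)"
    and "n \<ge> 2"
    and "product_order n lt"
    and "\<forall>i. Suc i < n \<longrightarrow> lt (unitv i) (unitv (Suc i))"
    and "finite \<P>"
    and "\<forall>P\<in>\<P>. affine_plane n d P"
    and "A = \<Union>\<P>"
    and "\<forall>P\<in>\<P>. \<forall>J. minimal_free_vars n d P J \<longrightarrow> 0 \<notin> J"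
  shows "Dset n lt A =
    {\<beta> \<in> expn n. \<beta> 0 < card {c \<in> {a 0 | a. a \<in> A}.
        pdrop \<beta> \<in> Dset (n - 1) (restr_order lt) {pdrop a | a. a \<in> A \<and> a 0 = c}}}"
proof -
  obtain m where n: "n = Suc m" using assms(2) by (cases n) auto
  have "finite ((\<lambda>a. a 0) ` P)" if P: "P \<in> \<P>" for P
  proof -
    obtain c where "\<forall>a\<in>P. a 0 = c"
      using affine_plane_first_coordinate_const assms(6,8) P by blast
    then have "(\<lambda>a. a 0) ` P \<subseteq> {c}" by auto
    then show ?thesis using finite_subset by blast
  qed
  moreover have "first_coords A = (\<Union>P\<in>\<P>. (\<lambda>a. a 0) ` P)"
    using assms(7) by (auto simp: first_coords_def)
  ultimately have "finite (first_coords A)" using assms(5) by simp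
  from standard_set_slice_sum[OF assms(3)[unfolded n] this]
  show ?thesis unfolding n first_coords_def slice_def by simp
qed

end
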